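(* Let $G=(V,E)$ be a control flow graph and $p$ a predicate node. The graph $A_p$ has at most one nontrivial strongly connected component, and if such a component exists, it is terminal.
   Context: A control flow graph (CFG) is a finite directed graph $G=(V,E)$ in which every node has at most two outgoing edges; nodes with exactly two outgoing edges are predicate nodes. A path from $n_1$ is a nonempty finite or infinite sequence of nodes with each adjacent pair an edge; it is maximal if it is infinite or its last node has no successor. $V_p$ is the set of nodes occurring on all maximal paths from $p$ in $G$. For $V'\subseteq V$, a $V'$-interval from $x$ to $y$ is a finite path $n_1\ldots n_k$ in $G$ with $k\ge 2$, $n_1=x\in V'$, $n_k=y\in V'$, and $n_i\notin V'$ for $1<i<k$. $A_p$ is the directed graph with node set $V_p$ and an edge $(x,y)$ iff there is a $V_p$-interval from $x$ to $y$ in $G$. A strongly connected component (SCC) is trivial if the subgraph it induces has no edge, and nontrivial otherwise; it is terminal if no edge leads from it to a node outside it. *)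

theory Defs
  imports Main
begin

definition succs :: "('a \<times> 'a) set \<Rightarrow> 'a \<Rightarrow> 'a set" where
  "succs E x = {y. (x, y) \<in> E}"

definition cfg :: "'a set \<Rightarrow> ('a \<times> 'a) set \<Rightarrow> bool" where
  "cfg V E \<longleftrightarrow> finite V \<and> E \<subseteq> V \<times> V \<and> (\<forall>x\<in>V. card (succs E x) \<le> 2)"

definition predicate_node :: "'a set \<Rightarrow> ('a \<times> 'a) set \<Rightarrow> 'a \<Rightarrow> bool" where
  "predicate_node V E p \<longleftrightarrow> p \<in> V \<and> card (succs E p) = 2"

definition fpath :: "'a set \<Rightarrow> ('a \<times> 'a) set \<Rightarrow> 'a list \<Rightarrow> bool" where
  "fpath V E xs \<longleftrightarrow> xs \<noteq> [] \<and> set xs \<subseteq> V \<and>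
     (\<forall>i. Suc i < length xs \<longrightarrow> (xs ! i, xs ! Suc i) \<in> E)"

definition ipath :: "'a set \<Rightarrow> ('a \<times> 'a) set \<Rightarrow> (nat \<Rightarrow> 'a) \<Rightarrow> bool" where
  "ipath V E f \<longleftrightarrow> (\<forall>i. f i \<in> V \<and> (f i, f (Suc i)) \<in> E)"

text \<open>Maximal paths from p: infinite paths from p, and finite paths from p ending in a node
  without successor. V_p: nodes occurring on all of them.\<close>
definition Vp :: "'a set \<Rightarrow> ('a \<times> 'a) set \<Rightarrow> 'a \<Rightarrow> 'a set" where
  "Vp V E p = {v \<in> V.
     (\<forall>xs. fpath V E xs \<and> hd xs = p \<and> succs E (last xs) = {} \<longrightarrow> v \<in> set xs) \<and>
     (\<forall>f. ipath V E f \<and> f 0 = p \<longrightarrow> v \<in> range f)}"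

definition interval :: "'a set \<Rightarrow> ('a \<times> 'a) set \<Rightarrow> 'a set \<Rightarrow> 'a \<Rightarrow> 'a \<Rightarrow> 'a list \<Rightarrow> bool" where
  "interval V E V' x y xs \<longleftrightarrow> fpath V E xs \<and> length xs \<ge> 2 \<and>
     hd xs = x \<and> x \<in> V' \<and> last xs = y \<and> y \<in> V' \<and>
     (\<forall>i. 0 < i \<and> i < length xs - 1 \<longrightarrow> xs ! i \<notin> V')"

definition Ap_edges :: "'a set \<Rightarrow> ('a \<times> 'a) set \<Rightarrow> 'a \<Rightarrow> ('a \<times> 'a) set" where
  "Ap_edges V E p = {(x, y). x \<in> Vp V E p \<and> y \<in> Vp V E p \<and>
     (\<exists>xs. interval V E (Vp V E p) x y xs)}"

definition is_scc :: "'a set \<Rightarrow> ('a \<times> 'a) set \<Rightarrow> 'a set \<Rightarrow> bool" where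
  "is_scc N R C \<longleftrightarrow> (\<exists>x\<in>N. C = {y \<in> N. (x, y) \<in> R\<^sup>* \<and> (y, x) \<in> R\<^sup>*})"

definition nontrivial_scc :: "('a \<times> 'a) set \<Rightarrow> 'a set \<Rightarrow> bool" where
  "nontrivial_scc R C \<longleftrightarrow> (\<exists>x\<in>C. \<exists>y\<in>C. (x, y) \<in> R)"

definition terminal_scc :: "('a \<times> 'a) set \<Rightarrow> 'a set \<Rightarrow> bool" where
  "terminal_scc R C \<longleftrightarrow> (\<forall>x\<in>C. \<forall>y. (x, y) \<in> R \<longrightarrow> y \<in> C)"

end

theory Submission
  imports Defs
begin

text \<open>Between nodes of \<open>V\<^sub>p\<close>, reachability in \<open>A\<^sub>p\<close> is reachability in \<open>G\<close>: an edge of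
  \<open>A\<^sub>p\<close> is a nonempty path of \<open>G\<close>, and a path of \<open>G\<close> between nodes of \<open>V\<^sub>p\<close> splits into
  \<open>V\<^sub>p\<close>-intervals at its nodes in \<open>V\<^sub>p\<close>. Every node of \<open>V\<^sub>p\<close> is reachable from \<open>p\<close>, because
  some maximal path from \<open>p\<close> stays among the nodes reachable from \<open>p\<close>. If \<open>x\<close> is reachable
  from \<open>p\<close> and lies on a cycle, every node reaching \<open>x\<close> has a successor reaching \<open>x\<close>, so
  some infinite path from \<open>p\<close> consists of such nodes; it meets all of \<open>V\<^sub>p\<close>, so every
  node of \<open>V\<^sub>p\<close> reaches \<open>x\<close>. Members of a nontrivial SCC of \<open>A\<^sub>p\<close> lie on cycles, hence are
  reachable in \<open>A\<^sub>p\<close> from all of \<open>V\<^sub>p\<close>, and this forces uniqueness and terminality.\<close>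

lemma fpath_singleton [simp]: "fpath V E [a] \<longleftrightarrow> a \<in> V"
  by (simp add: fpath_def)

lemma fpath_Cons_Cons [simp]:
  "fpath V E (a # b # xs) \<longleftrightarrow> a \<in> V \<and> (a, b) \<in> E \<and> fpath V E (b # xs)"
  unfolding fpath_def by (auto simp: nth_Cons less_Suc_eq_0_disj split: nat.split)

lemma fpath_append_Cons:
  "fpath V E (xs @ y # ys) \<longleftrightarrow> fpath V E (xs @ [y]) \<and> fpath V E (y # ys)"
proof (induction xs rule: induct_list012)
  case 1
  then show ?case by (auto simp: fpath_def)
next
  case (2 x)
  then show ?case by (cases ys) auto
next
  case (3 x x' xs)
  then show ?case by auto
qed

lemma fpath_imp_rtrancl:
  "fpath V E xs \<Longrightarrow> v \<in> set xs \<Longrightarrow> (hd xs, v) \<in> E\<^sup>*"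
  by (induction xs rule: induct_list012) (auto intro: converse_rtrancl_into_rtrancl)

lemma fpath_imp_trancl:
  "fpath V E (x # y # xs) \<Longrightarrow> (x, last (y # xs)) \<in> E\<^sup>+"
  by (induction xs arbitrary: x y) (auto intro: trancl_into_trancl2)

lemma rtrancl_imp_fpath:
  assumes "(a, b) \<in> E\<^sup>*" "E \<subseteq> V \<times> V" "a \<in> V"
  obtains xs where "fpath V E (a # xs)" "last (a # xs) = b"
  using assms
proof (induction arbitrary: thesis rule: converse_rtrancl_induct)
  case base
  then show ?case by (metis fpath_singleton last.simps)
next
  case (step a z)
  then obtain xs where "fpath V E (z # xs)" "last (z # xs) = b" by blast
  with step show ?case by (metis fpath_Cons_Cons last_ConsR list.distinct(1))
qed

lemma interval_intro:
  assumes "fpath V E (x # ys @ [y])" "x \<in> V'" "y \<in> V'" "set ys \<inter> V' = {}"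
  shows "interval V E V' x y (x # ys @ [y])"
  using assms unfolding interval_def
  by (auto simp: nth_Cons' nth_append dest!: nth_mem)

lemma Ap_edges_subset: "Ap_edges V E p \<subseteq> Vp V E p \<times> Vp V E p"
  by (auto simp: Ap_edges_def)

lemma Ap_edges_subset_trancl: "Ap_edges V E p \<subseteq> E\<^sup>+"
proof
  fix e assume "e \<in> Ap_edges V E p"
  then obtain x y xs where e: "e = (x, y)" and "interval V E (Vp V E p) x y xs"
    by (auto simp: Ap_edges_def)
  then have xs: "fpath V E xs" "2 \<le> length xs" "hd xs = x" "last xs = y"
    by (auto simp: interval_def)
  then obtain y' ys where "xs = x # y' # ys"
    by (cases xs; cases "tl xs") auto
  then show "e \<in> E\<^sup>+" using e xs fpath_imp_trancl[of V E x y' ys] by simp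
qed

lemma fpath_imp_rtrancl_Ap_edges:
  assumes "fpath V E (a # ys @ xs)" "xs \<noteq> []" "a \<in> Vp V E p" "last xs \<in> Vp V E p"
    and "set ys \<inter> Vp V E p = {}"
  shows "(a, last xs) \<in> (Ap_edges V E p)\<^sup>*"
  using assms
proof (induction xs arbitrary: a ys)
  case Nil
  then show ?case by simp
next
  case (Cons x xs)
  show ?case
  proof (cases "x \<in> Vp V E p")
    case True
    have paths: "fpath V E (a # ys @ [x])" "fpath V E (x # [] @ xs)"
      using Cons.prems(1) fpath_append_Cons[of V E "a # ys" x xs] by simp_all
    have "(a, x) \<in> Ap_edges V E p"
      unfolding Ap_edges_def using interval_intro[OF paths(1)] Cons.prems(3,5) True by blast
    moreover have "(x, last (x # xs)) \<in> (Ap_edges V E p)\<^sup>*"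
    proof (cases "xs = []")
      case False
      then show ?thesis using Cons.IH[OF paths(2)] Cons.prems(4) True by simp
    qed simp
    ultimately show ?thesis by simp
  next
    case False
    then have "xs \<noteq> []" using Cons.prems(4) by auto
    moreover have "fpath V E (a # (ys @ [x]) @ xs)" using Cons.prems(1) by simp
    moreover have "set (ys @ [x]) \<inter> Vp V E p = {}" using Cons.prems(5) False by auto
    ultimately have "(a, last xs) \<in> (Ap_edges V E p)\<^sup>*"
      using Cons.IH[of a "ys @ [x]"] Cons.prems(3,4) by simp
    then show ?thesis using \<open>xs \<noteq> []\<close> by simp
  qed
qed

lemma rtrancl_imp_rtrancl_Ap_edges:
  assumes "(a, b) \<in> E\<^sup>*" "E \<subseteq> V \<times> V" "a \<in> Vp V E p" "b \<in> Vp V E p"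
  shows "(a, b) \<in> (Ap_edges V E p)\<^sup>*"
proof -
  have "a \<in> V" using assms(3) by (simp add: Vp_def)
  with assms(1,2) obtain xs where xs: "fpath V E (a # xs)" "last (a # xs) = b"
    by (blast elim: rtrancl_imp_fpath)
  show ?thesis
  proof (cases "xs = []")
    case False
    then show ?thesis
      using fpath_imp_rtrancl_Ap_edges[of V E a "[]" xs p] xs assms(3,4) by simp
  qed (use xs in simp)
qed

lemma ex_ipath_within:
  assumes "p \<in> S" "S \<subseteq> V" "\<And>z. z \<in> S \<Longrightarrow> \<exists>w\<in>S. (z, w) \<in> E"
  obtains f where "ipath V E f" "f 0 = p" "range f \<subseteq> S"
proof -
  obtain g where g: "\<And>z. z \<in> S \<Longrightarrow> g z \<in> S \<and> (z, g z) \<in> E"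
    using assms(3) by metis
  define f where "f n = (g ^^ n) p" for n
  have f_in: "f n \<in> S" for n by (induction n) (auto simp: f_def assms(1) g)
  then have "ipath V E f" using g assms(2) by (auto simp: ipath_def f_def)
  moreover have "f 0 = p" "range f \<subseteq> S" using f_in by (auto simp: f_def)
  ultimately show thesis by (rule that)
qed

lemma Vp_subset_if_successor_within:
  assumes "p \<in> S" "S \<subseteq> V" "\<And>z. z \<in> S \<Longrightarrow> \<exists>w\<in>S. (z, w) \<in> E"
  shows "Vp V E p \<subseteq> S"
proof
  fix x assume "x \<in> Vp V E p"
  moreover obtain f where "ipath V E f" "f 0 = p" "range f \<subseteq> S"
    using assms by (rule ex_ipath_within)
  ultimately show "x \<in> S" by (auto simp: Vp_def)
qed

lemma Vp_reachable:
  assumes "E \<subseteq> V \<times> V" "p \<in> V" "x \<in> Vp V E p"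
  shows "(p, x) \<in> E\<^sup>*"
proof (cases "\<exists>z. (p, z) \<in> E\<^sup>* \<and> succs E z = {}")
  case True
  then obtain z xs where "fpath V E (p # xs)" "last (p # xs) = z" "succs E z = {}"
    using assms by (blast elim: rtrancl_imp_fpath)
  then have "x \<in> set (p # xs)" using assms(3) by (auto simp: Vp_def)
  then show ?thesis using fpath_imp_rtrancl \<open>fpath V E (p # xs)\<close> by fastforce
next
  case False
  let ?S = "{z \<in> V. (p, z) \<in> E\<^sup>*}"
  have "\<exists>w\<in>?S. (z, w) \<in> E" if z: "z \<in> ?S" for z
  proof -
    obtain w where "(z, w) \<in> E" using False z by (auto simp: succs_def)
    moreover have "w \<in> V" using \<open>(z, w) \<in> E\<close> assms(1) by blast
    ultimately show ?thesis using z by (blast intro: rtrancl_into_rtrancl)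
  qed
  then have "Vp V E p \<subseteq> ?S" using assms(2) by (intro Vp_subset_if_successor_within) auto
  then show ?thesis using assms(3) by auto
qed

lemma Vp_reaches_cycle:
  assumes "E \<subseteq> V \<times> V" "p \<in> V" "(x, x) \<in> E\<^sup>+" "(p, x) \<in> E\<^sup>*" "y \<in> Vp V E p"
  shows "(y, x) \<in> E\<^sup>*"
proof -
  let ?S = "{z \<in> V. (z, x) \<in> E\<^sup>*}"
  have "\<exists>w\<in>?S. (z, w) \<in> E" if "z \<in> ?S" for z
  proof -
    have "(z, x) \<in> E\<^sup>+" using that assms(3) by (auto simp: rtrancl_eq_or_trancl)
    then obtain w where "(z, w) \<in> E" "(w, x) \<in> E\<^sup>*" by (auto dest: tranclD)
    then show ?thesis using assms(1) by auto
  qed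
  then have "Vp V E p \<subseteq> ?S" using assms(2,4) by (intro Vp_subset_if_successor_within) auto
  then show ?thesis using assms(5) by auto
qed

lemma is_scc_subset: "is_scc N R C \<Longrightarrow> C \<subseteq> N"
  by (auto simp: is_scc_def)

lemma is_scc_eq_class:
  assumes "is_scc N R C" "x \<in> C"
  shows "C = {y \<in> N. (x, y) \<in> R\<^sup>* \<and> (y, x) \<in> R\<^sup>*}"
proof -
  obtain z where z: "C = {y \<in> N. (z, y) \<in> R\<^sup>* \<and> (y, z) \<in> R\<^sup>*}"
    using assms(1) by (auto simp: is_scc_def)
  then have "(z, x) \<in> R\<^sup>*" "(x, z) \<in> R\<^sup>*" using assms(2) by auto
  then show ?thesis unfolding z by (blast intro: rtrancl_trans)
qed

lemma nontrivial_scc_trancl: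
  assumes "is_scc N R C" "nontrivial_scc R C" "x \<in> C"
  shows "(x, x) \<in> R\<^sup>+"
proof -
  obtain u w where "u \<in> C" "w \<in> C" "(u, w) \<in> R"
    using assms(2) by (auto simp: nontrivial_scc_def)
  moreover note is_scc_eq_class[OF assms(1,3)]
  ultimately have "(x, w) \<in> R\<^sup>+" "(w, x) \<in> R\<^sup>*" by (auto intro: rtrancl_into_trancl1)
  then show ?thesis by (rule trancl_rtrancl_trancl)
qed

lemma nontrivial_scc_unique:
  assumes reach: "\<And>C x y. is_scc N R C \<Longrightarrow> nontrivial_scc R C \<Longrightarrow> x \<in> C \<Longrightarrow> y \<in> N \<Longrightarrow>
      (y, x) \<in> R\<^sup>*"
    and C1: "is_scc N R C1" "nontrivial_scc R C1"
    and C2: "is_scc N R C2" "nontrivial_scc R C2"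
  shows "C1 = C2"
proof -
  obtain x1 x2 where "x1 \<in> C1" "x2 \<in> C2"
    using C1(2) C2(2) by (auto simp: nontrivial_scc_def)
  moreover have "x1 \<in> N" "x2 \<in> N" using calculation C1(1) C2(1) by (auto dest: is_scc_subset)
  ultimately have "(x1, x2) \<in> R\<^sup>*" "(x2, x1) \<in> R\<^sup>*" using reach C1 C2 by auto
  then show ?thesis
    using is_scc_eq_class[OF C1(1) \<open>x1 \<in> C1\<close>] is_scc_eq_class[OF C2(1) \<open>x2 \<in> C2\<close>]
    by (blast intro: rtrancl_trans)
qed

lemma nontrivial_scc_terminal:
  assumes reach: "\<And>C x y. is_scc N R C \<Longrightarrow> nontrivial_scc R C \<Longrightarrow> x \<in> C \<Longrightarrow> y \<in> N \<Longrightarrow>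
      (y, x) \<in> R\<^sup>*"
    and "R \<subseteq> N \<times> N" and C: "is_scc N R C" "nontrivial_scc R C"
  shows "terminal_scc R C"
  unfolding terminal_scc_def
proof (intro ballI allI impI)
  fix x y assume "x \<in> C" "(x, y) \<in> R"
  moreover have "y \<in> N" using \<open>(x, y) \<in> R\<close> assms(2) by blast
  ultimately have "(y, x) \<in> R\<^sup>*" "(x, y) \<in> R\<^sup>*" "y \<in> N" using reach C by auto
  then show "y \<in> C" using is_scc_eq_class[OF C(1) \<open>x \<in> C\<close>] by blast
qed

lemma rtrancl_Ap_edges_to_nontrivial_scc:
  assumes "E \<subseteq> V \<times> V" "p \<in> V"
    and C: "is_scc (Vp V E p) (Ap_edges V E p) C" "nontrivial_scc (Ap_edges V E p) C"
    and "x \<in> C" "y \<in> Vp V E p"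
  shows "(y, x) \<in> (Ap_edges V E p)\<^sup>*"
proof -
  have x: "x \<in> Vp V E p" using C(1) \<open>x \<in> C\<close> by (auto dest: is_scc_subset)
  have "(x, x) \<in> (Ap_edges V E p)\<^sup>+" using nontrivial_scc_trancl C \<open>x \<in> C\<close> .
  then have "(x, x) \<in> (E\<^sup>+)\<^sup>+" using Ap_edges_subset_trancl by (rule trancl_mono)
  then have "(x, x) \<in> E\<^sup>+" by (simp add: trancl_id trans_trancl)
  moreover have "(p, x) \<in> E\<^sup>*" using assms(1,2) x by (rule Vp_reachable)
  ultimately have "(y, x) \<in> E\<^sup>*" using Vp_reaches_cycle[OF assms(1,2)] assms(6) by blast
  then show ?thesis using assms(1,6) x by (rule rtrancl_imp_rtrancl_Ap_edges)
qed

theorem lemma4p6: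
  fixes V :: "'a set" and E :: "('a \<times> 'a) set" and p :: 'a
  assumes "cfg V E" and "predicate_node V E p"
  shows "(\<forall>C1 C2. is_scc (Vp V E p) (Ap_edges V E p) C1 \<and> nontrivial_scc (Ap_edges V E p) C1 \<and>
                  is_scc (Vp V E p) (Ap_edges V E p) C2 \<and> nontrivial_scc (Ap_edges V E p) C2
                  \<longrightarrow> C1 = C2) \<and>
         (\<forall>C. is_scc (Vp V E p) (Ap_edges V E p) C \<and> nontrivial_scc (Ap_edges V E p) C
                  \<longrightarrow> terminal_scc (Ap_edges V E p) C)"
proof -
  have "E \<subseteq> V \<times> V" using assms(1) by (simp add: cfg_def)
  moreover have "p \<in> V" using assms(2) by (simp add: predicate_node_def)
  ultimately have reach: "\<And>C x y. is_scc (Vp V E p) (Ap_edges V E p) C \<Longrightarrow>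
      nontrivial_scc (Ap_edges V E p) C \<Longrightarrow> x \<in> C \<Longrightarrow> y \<in> Vp V E p \<Longrightarrow>
      (y, x) \<in> (Ap_edges V E p)\<^sup>*"
    by (rule rtrancl_Ap_edges_to_nontrivial_scc)
  show ?thesis
  proof (intro conjI allI impI)
    fix C1 C2
    assume "is_scc (Vp V E p) (Ap_edges V E p) C1 \<and> nontrivial_scc (Ap_edges V E p) C1 \<and>
      is_scc (Vp V E p) (Ap_edges V E p) C2 \<and> nontrivial_scc (Ap_edges V E p) C2"
    then show "C1 = C2" by (elim conjE) (rule nontrivial_scc_unique[OF reach])
  next
    fix C
    assume "is_scc (Vp V E p) (Ap_edges V E p) C \<and> nontrivial_scc (Ap_edges V E p) C"
    then show "terminal_scc (Ap_edges V E p) C"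
      by (elim conjE) (rule nontrivial_scc_terminal[OF reach Ap_edges_subset])
  qed
qed

end
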